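(* Let $\mathcal{X}=\mathbb{Z}^d$ or $\mathbb{R}^d$ and let $(\phi_x)_{x\in\mathcal{X}}$ be a non-singular measurable flow on a $\sigma$-finite measure space $(S,\mathcal{B},\mu)$. There is a decomposition of $S$ into two disjoint measurable sets $S=N_0\cup N_+$ such that (i) $N_0$ and $N_+$ are $(\phi_x)_{x\in\mathcal{X}}$-invariant modulo null sets; (ii) for every non-negative $g\in L^1(S,\mu)$ supported on $N_0$, $\lim_{x\to\infty}\int_S(U_xg\wedge g)\,\mathrm{d}\mu=0$; (iii) for every non-negative $h\in L^1(S,\mu)$ supported on $N_+$ and not vanishing identically, $\limsup_{x\to\infty}\int_S(U_xh\wedge h)\,\mathrm{d}\mu>0$. Properties (ii) and (iii) determine $N_0$ and $N_+$ uniquely modulo null sets.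
   Context: A measurable non-singular flow: maps $\phi_x:S\to S$ with $\phi_0=\mathrm{id}$, $\phi_{x_1+x_2}=\phi_{x_2}\circ\phi_{x_1}$, $(x,s)\mapsto\phi_x(s)$ jointly measurable, and $\mu\circ\phi_x^{-1}$ equivalent to $\mu$ for every $x$. $\omega_x=\frac{\mathrm{d}(\mu\circ\phi_x)}{\mathrm{d}\mu}$, and $(U_xg)(s)=\omega_x(s)g(\phi_x(s))$ for $g\in L^1(S,\mu)$. $x\to\infty$ means $|x|\to\infty$. *)

theory Defs
  imports "HOL-Analysis.Analysis"
begin

definition lattice_or_space :: "(real^'d) set \<Rightarrow> bool" where
  "lattice_or_space G \<longleftrightarrow> G = UNIV \<or> G = {x. \<forall>i. x $ i \<in> \<int>}"

definition nonsingular_flow ::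
  "'a measure \<Rightarrow> (real^'d) set \<Rightarrow> (real^'d \<Rightarrow> 'a \<Rightarrow> 'a) \<Rightarrow> bool" where
  "nonsingular_flow M G \<phi> \<longleftrightarrow>
     (\<forall>s\<in>space M. \<phi> 0 s = s) \<and>
     (\<forall>x1\<in>G. \<forall>x2\<in>G. \<forall>s\<in>space M. \<phi> (x1 + x2) s = \<phi> x2 (\<phi> x1 s)) \<and>
     (\<lambda>(x, s). \<phi> x s) \<in> restrict_space borel G \<Otimes>\<^sub>M M \<rightarrow>\<^sub>M M \<and>
     (\<forall>x\<in>G. \<phi> x \<in> M \<rightarrow>\<^sub>M M \<and>
        (\<forall>A\<in>sets M. emeasure M (\<phi> x -` A \<inter> space M) = 0 \<longleftrightarrow> emeasure M A = 0))"

text \<open>omega_x = d(mu o phi_x)/d mu, where (mu o phi_x)(A) = mu(phi_x(A)) = mu(phi_{-x}^{-1}(A)).\<close>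
definition flow_weight ::
  "'a measure \<Rightarrow> (real^'d \<Rightarrow> 'a \<Rightarrow> 'a) \<Rightarrow> real^'d \<Rightarrow> 'a \<Rightarrow> ennreal" where
  "flow_weight M \<phi> x = RN_deriv M (distr M M (\<phi> (- x)))"

definition flow_op ::
  "'a measure \<Rightarrow> (real^'d \<Rightarrow> 'a \<Rightarrow> 'a) \<Rightarrow> real^'d \<Rightarrow> ('a \<Rightarrow> real) \<Rightarrow> 'a \<Rightarrow> ennreal" where
  "flow_op M \<phi> x g s = flow_weight M \<phi> x s * ennreal (g (\<phi> x s))"

definition overlap ::
  "'a measure \<Rightarrow> (real^'d \<Rightarrow> 'a \<Rightarrow> 'a) \<Rightarrow> real^'d \<Rightarrow> ('a \<Rightarrow> real) \<Rightarrow> ennreal" where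
  "overlap M \<phi> x g = (\<integral>\<^sup>+ s. min (flow_op M \<phi> x g s) (ennreal (g s)) \<partial>M)"

definition to_infinity :: "(real^'d) set \<Rightarrow> (real^'d) filter" where
  "to_infinity G = inf at_infinity (principal G)"

definition invariant_mod0 ::
  "'a measure \<Rightarrow> (real^'d) set \<Rightarrow> (real^'d \<Rightarrow> 'a \<Rightarrow> 'a) \<Rightarrow> 'a set \<Rightarrow> bool" where
  "invariant_mod0 M G \<phi> N \<longleftrightarrow>
     (\<forall>x\<in>G. emeasure M (((\<phi> x -` N \<inter> space M) - N) \<union> (N - (\<phi> x -` N \<inter> space M))) = 0)"

definition vanishing_part ::
  "'a measure \<Rightarrow> (real^'d) set \<Rightarrow> (real^'d \<Rightarrow> 'a \<Rightarrow> 'a) \<Rightarrow> 'a set \<Rightarrow> bool" where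
  "vanishing_part M G \<phi> N \<longleftrightarrow>
     (\<forall>g. integrable M g \<and> (AE s in M. g s \<ge> 0) \<and> (AE s in M. s \<notin> N \<longrightarrow> g s = 0) \<longrightarrow>
        ((\<lambda>x. overlap M \<phi> x g) \<longlongrightarrow> 0) (to_infinity G))"

definition positive_part ::
  "'a measure \<Rightarrow> (real^'d) set \<Rightarrow> (real^'d \<Rightarrow> 'a \<Rightarrow> 'a) \<Rightarrow> 'a set \<Rightarrow> bool" where
  "positive_part M G \<phi> N \<longleftrightarrow>
     (\<forall>h. integrable M h \<and> (AE s in M. h s \<ge> 0) \<and> (AE s in M. s \<notin> N \<longrightarrow> h s = 0)
          \<and> \<not> (AE s in M. h s = 0) \<longrightarrow>
        Limsup (to_infinity G) (\<lambda>x. overlap M \<phi> x h) > 0)"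

end

theory Submission
  imports Defs
begin

text \<open>Call a measurable set \<open>A\<close> vanishing if \<open>\<integral> min (U x F) F \<rightarrow> 0\<close> for every non-negative
  \<open>F\<close> of finite integral supported on \<open>A\<close>. Vanishing sets are closed under preimages by the flow,
  since \<open>\<integral> min (U v (U x F)) (U x F) = \<integral> min (U v F) F\<close>, and under countable unions: for \<open>F = a + c\<close>
  the cross terms \<open>\<integral> min (U x a) c\<close> vanish too, because if they stayed \<open>\<ge> r\<close> at \<open>K\<close> points \<open>x\<^sub>i\<close>
  with pairwise far-apart differences, then \<open>K r \<le> \<integral> c + \<Sum>\<^sub>i\<^sub><\<^sub>j \<integral> min (U (x\<^sub>i - x\<^sub>j) a) a\<close>.
  By \<open>\<sigma>\<close>-finiteness there is an essentially largest vanishing set \<open>N\<^sub>0\<close>; it is invariant by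
  maximality, and its complement satisfies (iii) because vanishing overlaps of \<open>h\<close> would make
  \<open>{h > 0}\<close> a vanishing set. Uniqueness holds since a set contained both in a part with
  property (ii) and in a part with property (iii) is null.\<close>

section \<open>The transfer operator on non-negative functions\<close>

definition flow_op_nn ::
  "'a measure \<Rightarrow> (real^'d \<Rightarrow> 'a \<Rightarrow> 'a) \<Rightarrow> real^'d \<Rightarrow> ('a \<Rightarrow> ennreal) \<Rightarrow> 'a \<Rightarrow> ennreal" where
  "flow_op_nn M \<phi> x F s = flow_weight M \<phi> x s * F (\<phi> x s)"

definition overlap_nn ::
  "'a measure \<Rightarrow> (real^'d \<Rightarrow> 'a \<Rightarrow> 'a) \<Rightarrow> real^'d \<Rightarrow> ('a \<Rightarrow> ennreal) \<Rightarrow> ennreal" where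
  "overlap_nn M \<phi> x F = (\<integral>\<^sup>+ s. min (flow_op_nn M \<phi> x F s) (F s) \<partial>M)"

lemma overlap_eq_overlap_nn: "overlap M \<phi> x g = overlap_nn M \<phi> x (\<lambda>s. ennreal (g s))"
  unfolding overlap_def overlap_nn_def flow_op_def flow_op_nn_def by simp

lemma overlap_nn_le_nn_integral: "overlap_nn M \<phi> x F \<le> (\<integral>\<^sup>+ s. F s \<partial>M)"
  unfolding overlap_nn_def by (intro nn_integral_mono) simp

lemma flow_op_nn_add:
  "flow_op_nn M \<phi> x (\<lambda>s. F s + H s) s = flow_op_nn M \<phi> x F s + flow_op_nn M \<phi> x H s"
  unfolding flow_op_nn_def by (simp add: distrib_left)

lemma ennreal_mult_min: "(w::ennreal) * min a b = min (w * a) (w * b)"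
  by (cases "a \<le> b") (auto simp: min_def mult_left_mono antisym)

lemma flow_op_nn_min:
  "flow_op_nn M \<phi> x (\<lambda>s. min (F s) (H s)) s = min (flow_op_nn M \<phi> x F s) (flow_op_nn M \<phi> x H s)"
  unfolding flow_op_nn_def by (simp add: ennreal_mult_min)

lemma flow_op_nn_cmult:
  "flow_op_nn M \<phi> x (\<lambda>s. c * F s) s = c * flow_op_nn M \<phi> x F s"
  unfolding flow_op_nn_def by (simp add: mult.left_commute)

lemma flow_weight_measurable[measurable]: "flow_weight M \<phi> x \<in> borel_measurable M"
  unfolding flow_weight_def by simp

lemma eventually_to_infinity:
  "eventually P (to_infinity G) \<longleftrightarrow> (\<exists>R. \<forall>x\<in>G. R \<le> norm x \<longrightarrow> P x)"
  unfolding to_infinity_def eventually_inf_principal eventually_at_infinity by auto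

lemma eventually_in_to_infinity: "eventually (\<lambda>x. x \<in> G) (to_infinity G)"
  unfolding to_infinity_def eventually_inf_principal by simp

lemma ennreal_tendsto_0_realI:
  fixes f :: "'b \<Rightarrow> ennreal"
  assumes "\<And>e. 0 < e \<Longrightarrow> eventually (\<lambda>x. f x < ennreal e) F"
  shows "(f \<longlongrightarrow> 0) F"
proof (rule order_tendstoI)
  fix e :: ennreal assume "0 < e"
  then obtain y where y: "0 < y" "y < e" using dense by blast
  moreover have "y < top" using y(2) by (rule order.strict_trans2) simp
  ultimately have "y = ennreal (enn2real y)" "0 < enn2real y"
    by (auto simp: enn2real_positive_iff)
  with assms[of "enn2real y"] show "eventually (\<lambda>x. f x < e) F"
    by (auto elim: eventually_mono intro: order.strict_trans[OF _ y(2)])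
qed simp

lemma tendsto_0_imp_Limsup_eq_0_ennreal:
  fixes f :: "'b \<Rightarrow> ennreal"
  shows "(f \<longlongrightarrow> 0) F \<Longrightarrow> Limsup F f = 0"
  by (cases "F = bot") (auto simp: lim_imp_Limsup bot_ennreal)

lemma min_add_right_le:
  fixes a b c :: ennreal
  shows "min a (b + c) \<le> min a b + min a c"
  by (cases "a \<le> b"; cases "a \<le> c") (auto simp: min_def add_increasing add_increasing2)

lemma min_add_left_le:
  fixes a b c :: ennreal
  shows "min (a + b) c \<le> min a c + min b c"
  using min_add_right_le[of c a b] by (simp add: min.commute)

lemma min_add_add_le:
  fixes p q r t :: ennreal
  shows "min (p + q) (r + t) \<le> min p r + min p t + min q r + min q t"
  using min_add_left_le[of p q "r + t"] add_mono[OF min_add_right_le[of p r t] min_add_right_le[of q r t]]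
  by (simp add: add.assoc)

lemma min_add_add_le_min_plus:
  fixes p q r t :: ennreal
  shows "min (p + q) (r + t) \<le> min p r + q + t"
proof (cases "p \<le> r")
  case True
  then have "min (p + q) (r + t) \<le> min p r + q" by (simp add: min.coboundedI1 min_absorb1)
  then show ?thesis by (simp add: add_increasing2)
next
  case False
  then have "min (p + q) (r + t) \<le> min p r + t" by (simp add: min.coboundedI2 min_absorb2)
  then show ?thesis by (metis add.assoc add.commute add_increasing2 zero_le)
qed

lemma sum_le_bound_plus_pairwise_min:
  fixes c :: "nat \<Rightarrow> ennreal"
  assumes "\<And>i. c i \<le> \<beta>"
  shows "(\<Sum>i<K. c i) \<le> \<beta> + (\<Sum>j<K. \<Sum>i<j. min (c i) (c j))"
proof -
  have ex_max: "\<exists>m<K. (\<Sum>i<K. c i) \<le> c m + (\<Sum>j<K. \<Sum>i<j. min (c i) (c j))"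
    if "0 < K" for K
    using that
  proof (induction K)
    case (Suc n)
    show ?case
    proof (cases "n = 0")
      case False
      then obtain m where m: "m < n" "(\<Sum>i<n. c i) \<le> c m + (\<Sum>j<n. \<Sum>i<j. min (c i) (c j))"
        using Suc.IH by auto
      define m' where "m' = (if c m \<le> c n then n else m)"
      have "c m + c n = c m' + min (c m) (c n)"
        by (auto simp: m'_def min_def add.commute)
      also have "\<dots> \<le> c m' + (\<Sum>i<n. min (c i) (c n))"
        using m(1) by (intro add_left_mono member_le_sum) auto
      finally have cm: "c m + c n \<le> c m' + (\<Sum>i<n. min (c i) (c n))" .
      have "(\<Sum>i<Suc n. c i) \<le> (c m + (\<Sum>j<n. \<Sum>i<j. min (c i) (c j))) + c n"
        using m(2) by (simp add: add_right_mono)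
      also have "\<dots> = (c m + c n) + (\<Sum>j<n. \<Sum>i<j. min (c i) (c j))"
        by (simp add: ac_simps)
      also have "\<dots> \<le> (c m' + (\<Sum>i<n. min (c i) (c n))) + (\<Sum>j<n. \<Sum>i<j. min (c i) (c j))"
        using cm by (rule add_right_mono)
      also have "\<dots> = c m' + (\<Sum>j<Suc n. \<Sum>i<j. min (c i) (c j))"
        by (simp add: ac_simps)
      finally have "(\<Sum>i<Suc n. c i) \<le> c m' + (\<Sum>j<Suc n. \<Sum>i<j. min (c i) (c j))" .
      moreover have "m' < Suc n" using m(1) by (simp add: m'_def)
      ultimately show ?thesis by blast
    qed simp
  qed simp
  show ?thesis
  proof (cases "K = 0")
    case False
    with ex_max obtain m where "(\<Sum>i<K. c i) \<le> c m + (\<Sum>j<K. \<Sum>i<j. min (c i) (c j))"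
      by blast
    then show ?thesis using assms[of m] by (meson add_right_mono order_trans)
  qed simp
qed

lemma obtain_far_apart_seq:
  fixes G :: "'b::real_normed_vector set"
  assumes unbounded: "\<And>R. \<exists>x\<in>G. R \<le> norm x \<and> P x" and "0 \<le> R"
  obtains xs :: "nat \<Rightarrow> 'b"
  where "\<And>n. xs n \<in> G" "\<And>n. P (xs n)" "\<And>i j. i < j \<Longrightarrow> R \<le> norm (xs i - xs j)"
proof -
  obtain p where p: "\<And>R. p R \<in> G \<and> R \<le> norm (p R) \<and> P (p R)" using unbounded by metis
  define xs where "xs = rec_nat (p R) (\<lambda>_ v. p (norm v + R))"
  have xs_Suc: "xs (Suc n) = p (norm (xs n) + R)" for n by (simp add: xs_def)
  have xs_in: "xs n \<in> G \<and> P (xs n)" for n by (cases n) (simp_all add: xs_Suc p, simp add: xs_def p)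
  have step: "norm (xs n) + R \<le> norm (xs (Suc n))" for n unfolding xs_Suc using p by blast
  have grow: "norm (xs i) + R \<le> norm (xs j)" if "i < j" for i j
    using that
  proof (induction j)
    case (Suc j)
    then consider "i = j" | "i < j" by linarith
    then show ?case
    proof cases
      case 2
      then show ?thesis using Suc.IH step[of j] \<open>0 \<le> R\<close> by linarith
    qed (use step in simp)
  qed simp
  have "R \<le> norm (xs i - xs j)" if "i < j" for i j
    using grow[OF that] norm_triangle_ineq2[of "xs j" "xs i"] by (simp add: norm_minus_commute)
  with xs_in that show ?thesis by blast
qed

lemma nn_integral_noteq_top_mono:
  "(\<And>s. f s \<le> g s) \<Longrightarrow> (\<integral>\<^sup>+ s. g s \<partial>M) \<noteq> \<infinity> \<Longrightarrow> (\<integral>\<^sup>+ s. f s \<partial>M) \<noteq> \<infinity>"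
  using nn_integral_mono[of M f g] by (auto simp: top_unique)

lemma (in sigma_finite_measure) AE_eq_if_set_nn_integral_eq:
  assumes [measurable]: "f \<in> borel_measurable M" "g \<in> borel_measurable M"
    and eq: "\<And>A. A \<in> sets M \<Longrightarrow> set_nn_integral M A f = set_nn_integral M A g"
  shows "AE s in M. f s = g s"
proof (rule density_unique)
  show "density M f = density M g"
    by (rule measure_eqI) (simp_all add: emeasure_density eq)
qed simp_all

text \<open>\<open>W\<close> is a finite measure with the same null sets as \<open>M\<close>, and \<open>N\<close> is a countable union
  of members of \<open>\<A>\<close> whose \<open>W\<close>-measure attains the supremum over \<open>\<A>\<close>.\<close>

lemma (in sigma_finite_measure) obtain_maximal_mod_null:
  assumes sets: "\<A> \<subseteq> sets M" and "A0 \<in> \<A>" and UN: "\<And>A :: nat \<Rightarrow> 'a set. range A \<subseteq> \<A> \<Longrightarrow> (\<Union>i. A i) \<in> \<A>"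
  obtains N where "N \<in> \<A>" "\<And>B. B \<in> \<A> \<Longrightarrow> B - N \<in> null_sets M"
proof -
  obtain w where w[measurable]: "w \<in> borel_measurable M" and w_fin: "integral\<^sup>N M w \<noteq> \<infinity>"
    and w_pos: "\<And>s. s \<in> space M \<Longrightarrow> 0 < w s"
    using Ex_finite_integrable_function by blast
  define W where "W = density M w"
  have sets_W: "sets W = sets M" by (simp add: W_def)
  have W_eq: "emeasure W A = (\<integral>\<^sup>+ s. w s * indicator A s \<partial>M)" if "A \<in> sets M" for A
    using that by (simp add: W_def emeasure_density)
  have W_fin: "emeasure W A \<noteq> \<infinity>" if "A \<in> sets M" for A
  proof -
    have "emeasure W A \<le> integral\<^sup>N M w"
      unfolding W_eq[OF that] by (intro nn_integral_mono) (simp add: indicator_def)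
    with w_fin show ?thesis by (auto simp: top_unique)
  qed
  have W_null: "A \<in> null_sets M" if [measurable]: "A \<in> sets M" and "emeasure W A = 0" for A
  proof -
    have "AE s in M. w s * indicator A s = 0"
      using that by (simp add: W_eq nn_integral_0_iff_AE)
    then have "AE s in M. s \<notin> A"
      by (rule AE_mp) (auto intro!: AE_I2 simp: indicator_def dest: w_pos)
    then show ?thesis by (simp add: AE_iff_null_sets)
  qed
  have "emeasure W ` \<A> \<noteq> {}" using \<open>A0 \<in> \<A>\<close> by blast
  then obtain f :: "nat \<Rightarrow> ennreal"
    where f: "range f \<subseteq> emeasure W ` \<A>" "Sup (emeasure W ` \<A>) = (SUP i. f i)"
    by (elim ennreal_Sup_countable_SUP[THEN exE] conjE) (rule that; assumption)
  then have "\<forall>i. \<exists>A. A \<in> \<A> \<and> f i = emeasure W A" by blast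
  then obtain A :: "nat \<Rightarrow> 'a set" where A: "\<And>i. A i \<in> \<A>" "\<And>i. f i = emeasure W (A i)"
    by metis
  define N where "N = (\<Union>i. A i)"
  have N: "N \<in> \<A>" unfolding N_def by (rule UN) (auto intro: A(1))
  have N_sets: "N \<in> sets M" using N sets by (rule rev_subsetD)
  have max: "emeasure W B \<le> emeasure W N" if "B \<in> \<A>" for B
  proof -
    have "emeasure W B \<le> Sup (emeasure W ` \<A>)" using that by (rule SUP_upper)
    also have "\<dots> = (SUP i. f i)" by (rule f(2))
    also have "\<dots> \<le> emeasure W N"
    proof (rule SUP_least)
      fix i
      have "A i \<subseteq> N" by (auto simp: N_def)
      then show "f i \<le> emeasure W N"
        unfolding A(2) using N_sets by (intro emeasure_mono) (simp_all add: sets_W)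
    qed
    finally show ?thesis .
  qed
  show ?thesis
  proof (rule that[OF N])
    fix B assume B: "B \<in> \<A>"
    then have B_sets: "B \<in> sets M" using sets by blast
    have "(\<Union>i. case_nat B A i) \<in> \<A>" using A(1) B by (intro UN) (auto split: nat.split)
    moreover have "(\<Union>i. case_nat B A i) = N \<union> (B - N)"
    proof (intro equalityI subsetI)
      fix s assume "s \<in> (\<Union>i. case_nat B A i)"
      then obtain i where "s \<in> case_nat B A i" by blast
      then show "s \<in> N \<union> (B - N)" by (cases i) (auto simp: N_def)
    next
      fix s assume "s \<in> N \<union> (B - N)"
      then consider "s \<in> case_nat B A 0" | i where "s \<in> case_nat B A (Suc i)"
        by (auto simp: N_def)
      then show "s \<in> (\<Union>i. case_nat B A i)" by cases blast+
    qed
    ultimately have "emeasure W (N \<union> (B - N)) \<le> emeasure W N" using max by simp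
    moreover have "emeasure W (N \<union> (B - N)) = emeasure W N + emeasure W (B - N)"
      using N_sets B_sets by (intro plus_emeasure[symmetric]) (auto simp: sets_W)
    ultimately have "emeasure W N + emeasure W (B - N) \<le> emeasure W N + 0" by simp
    then have "emeasure W (B - N) = 0"
      using W_fin[OF N_sets] by (simp add: ennreal_add_left_cancel_le)
    then show "B - N \<in> null_sets M" using B_sets N_sets by (intro W_null) auto
  qed
qed

section \<open>Uniqueness of the decomposition\<close>

lemma (in sigma_finite_measure) vanishing_positive_Int_null:
  assumes V: "vanishing_part M G \<phi> A" and P: "positive_part M G \<phi> B"
    and [measurable]: "A \<in> sets M" "B \<in> sets M"
  shows "A \<inter> B \<in> null_sets M"
proof (rule ccontr)
  assume not_null: "A \<inter> B \<notin> null_sets M"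
  obtain w :: "'a \<Rightarrow> real" where [measurable]: "w \<in> borel_measurable M"
    and w_pos: "\<And>s. 0 < w s" and "integrable M w"
    using obtain_positive_integrable_function by metis
  define h where "h s = w s * indicator (A \<inter> B) s" for s
  have "integrable M h"
    unfolding h_def by (rule integrable_real_mult_indicator) (auto intro: \<open>integrable M w\<close>)
  moreover have "AE s in M. 0 \<le> h s" using w_pos by (simp add: h_def less_imp_le)
  moreover have "\<not> (AE s in M. h s = 0)"
  proof
    assume "AE s in M. h s = 0"
    moreover have "w s \<noteq> 0" for s using w_pos[of s] by simp
    ultimately have "AE s in M. s \<notin> A \<inter> B"
      by (elim AE_mp) (auto simp: h_def indicator_def)
    with not_null show False by (simp add: AE_iff_null_sets)
  qed
  ultimately have "((\<lambda>x. overlap M \<phi> x h) \<longlongrightarrow> 0) (to_infinity G)"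
    and "Limsup (to_infinity G) (\<lambda>x. overlap M \<phi> x h) > 0"
    using V P unfolding vanishing_part_def positive_part_def by (auto simp: h_def)
  then show False by (simp add: tendsto_0_imp_Limsup_eq_0_ennreal)
qed

lemma (in sigma_finite_measure) vanishing_positive_partition_unique:
  assumes "N0 \<in> sets M" "Np \<in> sets M" "N0 \<union> Np = space M" "N0 \<inter> Np = {}"
    and "vanishing_part M G \<phi> N0" "positive_part M G \<phi> Np"
    and "N0' \<in> sets M" "Np' \<in> sets M" "N0' \<union> Np' = space M" "N0' \<inter> Np' = {}"
    and "vanishing_part M G \<phi> N0'" "positive_part M G \<phi> Np'"
  shows "(N0 - N0') \<union> (N0' - N0) \<in> null_sets M" "(Np - Np') \<union> (Np' - Np) \<in> null_sets M"
proof -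
  have "(N0 \<inter> Np') \<union> (N0' \<inter> Np) \<in> null_sets M"
    using assms by (intro null_sets.Un vanishing_positive_Int_null)
  moreover have "(N0 - N0') \<union> (N0' - N0) = (N0 \<inter> Np') \<union> (N0' \<inter> Np)"
    and "(Np - Np') \<union> (Np' - Np) = (N0 \<inter> Np') \<union> (N0' \<inter> Np)"
    using assms(3,4,9,10) by blast+
  ultimately show "(N0 - N0') \<union> (N0' - N0) \<in> null_sets M" "(Np - Np') \<union> (Np' - Np) \<in> null_sets M"
    by simp_all
qed

lemma lattice_or_space_subgroup:
  assumes "lattice_or_space G"
  shows "0 \<in> G" "\<And>x y. x \<in> G \<Longrightarrow> y \<in> G \<Longrightarrow> x + y \<in> G" "\<And>x. x \<in> G \<Longrightarrow> - x \<in> G"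
  using assms unfolding lattice_or_space_def by (auto simp: Ints_add Ints_minus)

locale nonsingular_group_flow = sigma_finite_measure M
  for M :: "'a measure" +
  fixes G :: "(real^'d) set" and \<phi> :: "real^'d \<Rightarrow> 'a \<Rightarrow> 'a"
  assumes zero_in_G: "0 \<in> G"
    and add_in_G: "x \<in> G \<Longrightarrow> y \<in> G \<Longrightarrow> x + y \<in> G"
    and uminus_in_G: "x \<in> G \<Longrightarrow> - x \<in> G"
    and nonsingular: "nonsingular_flow M G \<phi>"
begin

abbreviation overlap_vanishes :: "('a \<Rightarrow> ennreal) \<Rightarrow> bool" where
  "overlap_vanishes F \<equiv> ((\<lambda>x. overlap_nn M \<phi> x F) \<longlongrightarrow> 0) (to_infinity G)"

lemma diff_in_G: "x \<in> G \<Longrightarrow> y \<in> G \<Longrightarrow> x - y \<in> G"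
  using add_in_G[of x "- y"] uminus_in_G[of y] by simp

lemma flow_measurable: "x \<in> G \<Longrightarrow> \<phi> x \<in> M \<rightarrow>\<^sub>M M"
  using nonsingular unfolding nonsingular_flow_def by blast

lemma flow_in_space: "x \<in> G \<Longrightarrow> s \<in> space M \<Longrightarrow> \<phi> x s \<in> space M"
  using flow_measurable by (rule measurable_space)

lemma flow_zero: "s \<in> space M \<Longrightarrow> \<phi> 0 s = s"
  using nonsingular unfolding nonsingular_flow_def by blast

lemma flow_add: "x \<in> G \<Longrightarrow> y \<in> G \<Longrightarrow> s \<in> space M \<Longrightarrow> \<phi> (x + y) s = \<phi> y (\<phi> x s)"
  using nonsingular unfolding nonsingular_flow_def by blast

lemma flow_uminus_cancel: "x \<in> G \<Longrightarrow> s \<in> space M \<Longrightarrow> \<phi> x (\<phi> (- x) s) = s"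
  using flow_add[OF uminus_in_G, of x x s] flow_zero[of s] by simp

lemma flow_vimage_null_iff:
  assumes x: "x \<in> G" and A: "A \<in> sets M"
  shows "\<phi> x -` A \<inter> space M \<in> null_sets M \<longleftrightarrow> A \<in> null_sets M"
proof -
  have "emeasure M (\<phi> x -` A \<inter> space M) = 0 \<longleftrightarrow> emeasure M A = 0"
    using nonsingular x A unfolding nonsingular_flow_def by blast
  then show ?thesis using measurable_sets[OF flow_measurable[OF x] A] A by (simp add: null_sets_def)
qed

lemma absolutely_continuous_distr_flow:
  assumes x: "x \<in> G"
  shows "absolutely_continuous M (distr M M (\<phi> x))"
  unfolding absolutely_continuous_def
proof
  fix A assume A: "A \<in> null_sets M"
  then have "\<phi> x -` A \<inter> space M \<in> null_sets M" using flow_vimage_null_iff[OF x] by blast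
  then have "emeasure (distr M M (\<phi> x)) A = 0"
    using A by (subst emeasure_distr[OF flow_measurable[OF x]]) (auto intro: null_setsD1)
  with A show "A \<in> null_sets (distr M M (\<phi> x))" by (simp add: null_sets_def)
qed

lemma AE_flow: "x \<in> G \<Longrightarrow> AE s in M. P s \<Longrightarrow> AE s in M. P (\<phi> x s)"
  by (rule AE_distrD[OF flow_measurable])
    (auto intro: absolutely_continuous_AE[OF _ absolutely_continuous_distr_flow])

lemma flow_op_nn_measurable:
  "x \<in> G \<Longrightarrow> F \<in> borel_measurable M \<Longrightarrow> flow_op_nn M \<phi> x F \<in> borel_measurable M"
  unfolding flow_op_nn_def by (measurable, rule measurable_compose[OF flow_measurable])

lemma nn_integral_flow_op_nn_mult:
  assumes x: "x \<in> G" and [measurable]: "F \<in> borel_measurable M" "H \<in> borel_measurable M"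
  shows "(\<integral>\<^sup>+ s. flow_op_nn M \<phi> x F s * H s \<partial>M) = (\<integral>\<^sup>+ s. F s * H (\<phi> (- x) s) \<partial>M)"
proof -
  have [measurable]: "\<phi> x \<in> M \<rightarrow>\<^sub>M M" "\<phi> (- x) \<in> M \<rightarrow>\<^sub>M M"
    using x by (simp_all add: flow_measurable uminus_in_G)
  have density: "density M (flow_weight M \<phi> x) = distr M M (\<phi> (- x))"
    unfolding flow_weight_def using absolutely_continuous_distr_flow[OF uminus_in_G[OF x]]
    by (intro density_RN_deriv) auto
  have "(\<integral>\<^sup>+ s. flow_op_nn M \<phi> x F s * H s \<partial>M)
      = (\<integral>\<^sup>+ s. flow_weight M \<phi> x s * (F (\<phi> x s) * H s) \<partial>M)"
    by (simp add: flow_op_nn_def ac_simps)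
  also have "\<dots> = (\<integral>\<^sup>+ s. F (\<phi> x s) * H s \<partial>density M (flow_weight M \<phi> x))"
    by (simp add: nn_integral_density)
  also have "\<dots> = (\<integral>\<^sup>+ s. F (\<phi> x (\<phi> (- x) s)) * H (\<phi> (- x) s) \<partial>M)"
    unfolding density by (simp add: nn_integral_distr)
  also have "\<dots> = (\<integral>\<^sup>+ s. F s * H (\<phi> (- x) s) \<partial>M)"
    by (intro nn_integral_cong) (simp add: flow_uminus_cancel[OF x])
  finally show ?thesis .
qed

lemma nn_integral_flow_op_nn:
  "x \<in> G \<Longrightarrow> F \<in> borel_measurable M \<Longrightarrow> (\<integral>\<^sup>+ s. flow_op_nn M \<phi> x F s \<partial>M) = (\<integral>\<^sup>+ s. F s \<partial>M)"
  using nn_integral_flow_op_nn_mult[of x F "\<lambda>_. 1"] by simp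

lemma flow_op_nn_flow_op_nn_AE:
  assumes x: "x \<in> G" and y: "y \<in> G" and [measurable]: "F \<in> borel_measurable M"
  shows "AE s in M. flow_op_nn M \<phi> x (flow_op_nn M \<phi> y F) s = flow_op_nn M \<phi> (x + y) F s"
proof (rule AE_eq_if_set_nn_integral_eq)
  fix A :: "'a set" assume [measurable]: "A \<in> sets M"
  have [measurable]: "(\<lambda>s. indicator A (\<phi> (- x) s) :: ennreal) \<in> borel_measurable M"
    using x by (intro measurable_compose[OF flow_measurable]) (auto intro: uminus_in_G)
  have "set_nn_integral M A (flow_op_nn M \<phi> x (flow_op_nn M \<phi> y F))
      = (\<integral>\<^sup>+ s. F s * indicator A (\<phi> (- x) (\<phi> (- y) s)) \<partial>M)"
    using x y by (simp add: nn_integral_flow_op_nn_mult flow_op_nn_measurable)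
  also have "\<dots> = set_nn_integral M A (flow_op_nn M \<phi> (x + y) F)"
    using x y by (simp add: nn_integral_flow_op_nn_mult add_in_G uminus_in_G add.commute
        flow_add[symmetric] cong: nn_integral_cong)
  finally show "set_nn_integral M A (flow_op_nn M \<phi> x (flow_op_nn M \<phi> y F))
      = set_nn_integral M A (flow_op_nn M \<phi> (x + y) F)" .
qed (use x y in \<open>simp_all add: flow_op_nn_measurable add_in_G\<close>)

lemma flow_op_nn_zero_AE:
  assumes [measurable]: "F \<in> borel_measurable M"
  shows "AE s in M. flow_op_nn M \<phi> 0 F s = F s"
proof (rule AE_eq_if_set_nn_integral_eq)
  fix A :: "'a set" assume "A \<in> sets M"
  then show "set_nn_integral M A (flow_op_nn M \<phi> 0 F) = set_nn_integral M A F"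
    by (simp add: nn_integral_flow_op_nn_mult zero_in_G flow_zero cong: nn_integral_cong)
qed (simp_all add: flow_op_nn_measurable zero_in_G)

lemma overlap_nn_diff:
  assumes y: "y \<in> G" and z: "z \<in> G" and a[measurable]: "a \<in> borel_measurable M"
  shows "(\<integral>\<^sup>+ s. min (flow_op_nn M \<phi> y a s) (flow_op_nn M \<phi> z a s) \<partial>M) = overlap_nn M \<phi> (y - z) a"
proof -
  have mz: "- z \<in> G" using z by (rule uminus_in_G)
  have [measurable]: "flow_op_nn M \<phi> y a \<in> borel_measurable M" "flow_op_nn M \<phi> z a \<in> borel_measurable M"
    using y z by (simp_all add: flow_op_nn_measurable)
  have "(\<integral>\<^sup>+ s. min (flow_op_nn M \<phi> y a s) (flow_op_nn M \<phi> z a s) \<partial>M)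
      = (\<integral>\<^sup>+ s. flow_op_nn M \<phi> (- z) (\<lambda>s. min (flow_op_nn M \<phi> y a s) (flow_op_nn M \<phi> z a s)) s \<partial>M)"
    using mz by (simp add: nn_integral_flow_op_nn)
  also have "\<dots> = (\<integral>\<^sup>+ s. min (flow_op_nn M \<phi> (y - z) a s) (a s) \<partial>M)"
    unfolding flow_op_nn_min
  proof (rule nn_integral_cong_AE)
    show "AE s in M. min (flow_op_nn M \<phi> (- z) (flow_op_nn M \<phi> y a) s)
        (flow_op_nn M \<phi> (- z) (flow_op_nn M \<phi> z a) s) = min (flow_op_nn M \<phi> (y - z) a s) (a s)"
      using flow_op_nn_flow_op_nn_AE[OF mz y a] flow_op_nn_flow_op_nn_AE[OF mz z a]
        flow_op_nn_zero_AE[OF a]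
      by eventually_elim simp
  qed
  finally show ?thesis unfolding overlap_nn_def .
qed

lemma overlap_nn_flow_op_nn:
  assumes v: "v \<in> G" and x: "x \<in> G" and F[measurable]: "F \<in> borel_measurable M"
  shows "overlap_nn M \<phi> v (flow_op_nn M \<phi> x F) = overlap_nn M \<phi> v F"
proof -
  have "overlap_nn M \<phi> v (flow_op_nn M \<phi> x F)
      = (\<integral>\<^sup>+ s. min (flow_op_nn M \<phi> (v + x) F s) (flow_op_nn M \<phi> x F s) \<partial>M)"
    unfolding overlap_nn_def using flow_op_nn_flow_op_nn_AE[OF v x F]
    by (intro nn_integral_cong_AE) (auto elim!: eventually_mono)
  also have "\<dots> = overlap_nn M \<phi> v F" using overlap_nn_diff[OF add_in_G[OF v x] x] by simp
  finally show ?thesis .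
qed

section \<open>Functions with vanishing overlaps\<close>

lemma sum_nn_integral_min_flow_op_nn_le:
  fixes xs :: "nat \<Rightarrow> real^'d"
  assumes xs: "\<And>i. xs i \<in> G" and [measurable]: "a \<in> borel_measurable M" "b \<in> borel_measurable M"
  shows "(\<Sum>i<K. \<integral>\<^sup>+ s. min (flow_op_nn M \<phi> (xs i) a s) (b s) \<partial>M)
    \<le> (\<integral>\<^sup>+ s. b s \<partial>M) + (\<Sum>j<K. \<Sum>i<j. overlap_nn M \<phi> (xs i - xs j) a)"
proof -
  let ?U = "\<lambda>i. flow_op_nn M \<phi> (xs i) a"
  have [measurable]: "?U i \<in> borel_measurable M" for i using xs by (simp add: flow_op_nn_measurable)
  have "(\<Sum>i<K. \<integral>\<^sup>+ s. min (?U i s) (b s) \<partial>M) = (\<integral>\<^sup>+ s. (\<Sum>i<K. min (?U i s) (b s)) \<partial>M)"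
    by (rule nn_integral_sum[symmetric]) measurable
  also have "\<dots> \<le> (\<integral>\<^sup>+ s. b s + (\<Sum>j<K. \<Sum>i<j. min (?U i s) (?U j s)) \<partial>M)"
  proof (rule nn_integral_mono)
    fix s
    have "(\<Sum>i<K. min (?U i s) (b s))
        \<le> b s + (\<Sum>j<K. \<Sum>i<j. min (min (?U i s) (b s)) (min (?U j s) (b s)))"
      by (rule sum_le_bound_plus_pairwise_min) simp
    also have "\<dots> \<le> b s + (\<Sum>j<K. \<Sum>i<j. min (?U i s) (?U j s))"
      by (intro add_left_mono sum_mono min.mono min.cobounded1)
    finally show "(\<Sum>i<K. min (?U i s) (b s)) \<le> b s + (\<Sum>j<K. \<Sum>i<j. min (?U i s) (?U j s))" .
  qed
  also have "\<dots> = (\<integral>\<^sup>+ s. b s \<partial>M) + (\<Sum>j<K. \<Sum>i<j. \<integral>\<^sup>+ s. min (?U i s) (?U j s) \<partial>M)"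
    by (simp add: nn_integral_add nn_integral_sum)
  also have "\<dots> = (\<integral>\<^sup>+ s. b s \<partial>M) + (\<Sum>j<K. \<Sum>i<j. overlap_nn M \<phi> (xs i - xs j) a)"
    using xs by (simp add: overlap_nn_diff)
  finally show ?thesis .
qed

lemma tendsto_nn_integral_min_flow_op_nn:
  assumes [measurable]: "a \<in> borel_measurable M" and a_van: "overlap_vanishes a"
    and [measurable]: "b \<in> borel_measurable M" and b_fin: "(\<integral>\<^sup>+ s. b s \<partial>M) \<noteq> \<infinity>"
  shows "((\<lambda>x. \<integral>\<^sup>+ s. min (flow_op_nn M \<phi> x a s) (b s) \<partial>M) \<longlongrightarrow> 0) (to_infinity G)"
proof (rule ennreal_tendsto_0_realI)
  fix r :: real assume r: "0 < r"
  define f where "f x = (\<integral>\<^sup>+ s. min (flow_op_nn M \<phi> x a s) (b s) \<partial>M)" for x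
  have "eventually (\<lambda>x. f x < ennreal r) (to_infinity G)"
  proof (rule ccontr)
    assume "\<not> ?thesis"
    then have large: "\<And>R. \<exists>x\<in>G. R \<le> norm x \<and> ennreal r \<le> f x"
      unfolding eventually_to_infinity by (auto simp: not_less)
    define B where "B = enn2real (\<integral>\<^sup>+ s. b s \<partial>M)"
    have B: "(\<integral>\<^sup>+ s. b s \<partial>M) = ennreal B" "0 \<le> B" using b_fin by (auto simp: B_def less_top)
    obtain K :: nat where K: "B + 1 < real K * r" using ex_less_of_nat_mult[OF r] by blast
    then have "0 < K" using B(2) r by (cases K) auto
    \<comment> \<open>with this \<open>\<delta>\<close> the \<open>K\<^sup>2\<close> pairwise overlaps contribute at most 1\<close>
    define \<delta> where "\<delta> = ennreal (1 / (real K * real K))"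
    have "eventually (\<lambda>x. overlap_nn M \<phi> x a < \<delta>) (to_infinity G)"
      using a_van by (rule order_tendstoD) (simp add: \<delta>_def \<open>0 < K\<close>)
    then obtain R where R: "\<And>v. v \<in> G \<Longrightarrow> R \<le> norm v \<Longrightarrow> overlap_nn M \<phi> v a < \<delta>"
      unfolding eventually_to_infinity by blast
    obtain xs :: "nat \<Rightarrow> real^'d" where xs: "\<And>n. xs n \<in> G" "\<And>n. ennreal r \<le> f (xs n)"
      and far: "\<And>i j. i < j \<Longrightarrow> max R 0 \<le> norm (xs i - xs j)"
      using obtain_far_apart_seq[OF large, of "max R 0"] by auto
    have "ennreal (real K * r) = (\<Sum>i<K. ennreal r)"
      using r by (simp add: ennreal_of_nat_eq_real_of_nat ennreal_mult')
    also have "\<dots> \<le> (\<Sum>i<K. f (xs i))" using xs(2) by (rule sum_mono)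
    also have "\<dots> \<le> ennreal B + (\<Sum>j<K. \<Sum>i<j. overlap_nn M \<phi> (xs i - xs j) a)"
      unfolding f_def B(1)[symmetric] using xs(1) by (rule sum_nn_integral_min_flow_op_nn_le) simp_all
    also have "\<dots> \<le> ennreal B + (\<Sum>j<K. \<Sum>i<j. \<delta>)"
      using far xs(1) by (intro add_left_mono sum_mono less_imp_le[OF R] diff_in_G) auto
    also have "\<dots> \<le> ennreal B + of_nat K * (of_nat K * \<delta>)"
    proof -
      have "(\<Sum>j<K. \<Sum>i<j. \<delta>) \<le> (\<Sum>j<K. of_nat K * \<delta>)"
        by (intro sum_mono) (simp add: mult_right_mono)
      then show ?thesis by (simp add: add_left_mono)
    qed
    also have "\<dots> = ennreal (B + 1)"
      using \<open>0 < K\<close> B(2)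
      by (simp add: \<delta>_def ennreal_of_nat_eq_real_of_nat ennreal_plus
          ennreal_mult'[symmetric] ennreal_mult[symmetric])
    finally have "ennreal (real K * r) \<le> ennreal (B + 1)" .
    then have "real K * r \<le> B + 1" using B(2) ennreal_le_iff by (metis add_nonneg_nonneg zero_le_one)
    with K show False by simp
  qed
  then show "eventually (\<lambda>x. (\<integral>\<^sup>+ s. min (flow_op_nn M \<phi> x a s) (b s) \<partial>M) < ennreal r) (to_infinity G)"
    by (simp add: f_def)
qed

lemma overlap_vanishes_approx:
  assumes [measurable]: "F \<in> borel_measurable M"
    and approx: "\<And>e. 0 < e \<Longrightarrow> \<exists>F'. F' \<in> borel_measurable M \<and> (\<forall>s. F' s \<le> F s) \<and>
        (\<integral>\<^sup>+ s. F s - F' s \<partial>M) < ennreal e \<and> overlap_vanishes F'"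
  shows "overlap_vanishes F"
proof (rule ennreal_tendsto_0_realI)
  fix r :: real assume r: "0 < r"
  obtain F' where [measurable]: "F' \<in> borel_measurable M" and le: "\<And>s. F' s \<le> F s"
    and small: "(\<integral>\<^sup>+ s. F s - F' s \<partial>M) < ennreal (r / 4)" and F'_van: "overlap_vanishes F'"
    using approx[of "r / 4"] r by auto
  define D where "D s = F s - F' s" for s
  have [measurable]: "D \<in> borel_measurable M" unfolding D_def by measurable
  have F_eq: "F = (\<lambda>s. F' s + D s)" using le by (auto simp: D_def add_diff_inverse_ennreal)
  have "eventually (\<lambda>x. overlap_nn M \<phi> x F' < ennreal (r / 4)) (to_infinity G)"
    using F'_van r by (intro order_tendstoD) auto
  with eventually_in_to_infinity show "eventually (\<lambda>x. overlap_nn M \<phi> x F < ennreal r) (to_infinity G)"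
  proof eventually_elim
    case (elim x)
    then have [measurable]: "flow_op_nn M \<phi> x F' \<in> borel_measurable M"
      "flow_op_nn M \<phi> x D \<in> borel_measurable M"
      by (simp_all add: flow_op_nn_measurable)
    have "overlap_nn M \<phi> x F
        \<le> (\<integral>\<^sup>+ s. min (flow_op_nn M \<phi> x F' s) (F' s) + flow_op_nn M \<phi> x D s + D s \<partial>M)"
      unfolding overlap_nn_def by (subst (1 2) F_eq, unfold flow_op_nn_add)
        (intro nn_integral_mono min_add_add_le_min_plus)
    also have "\<dots> = overlap_nn M \<phi> x F' + (\<integral>\<^sup>+ s. D s \<partial>M) + (\<integral>\<^sup>+ s. D s \<partial>M)"
      using elim(1) by (simp add: overlap_nn_def nn_integral_add nn_integral_flow_op_nn)
    also have "\<dots> \<le> ennreal (r / 4) + ennreal (r / 4) + ennreal (r / 4)"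
      using elim(2) small unfolding D_def by (intro add_mono less_imp_le)
    also have "\<dots> < ennreal r" using r by (simp add: ennreal_plus[symmetric] ennreal_less_iff)
    finally show ?case .
  qed
qed

lemma overlap_vanishes_SUP:
  assumes F[measurable]: "F \<in> borel_measurable M" and F_fin: "(\<integral>\<^sup>+ s. F s \<partial>M) \<noteq> \<infinity>"
    and [measurable]: "\<And>n. Fn n \<in> borel_measurable M"
    and mono: "\<And>n s. Fn n s \<le> Fn (Suc n) s" and le: "\<And>n s. Fn n s \<le> F s"
    and lim: "AE s in M. (SUP n. Fn n s) = F s"
    and van: "\<And>n. overlap_vanishes (Fn n)"
  shows "overlap_vanishes F"
proof (rule overlap_vanishes_approx)
  fix e :: real assume "0 < e"
  have "(INF n. \<integral>\<^sup>+ s. F s - Fn n s \<partial>M) = (\<integral>\<^sup>+ s. (INF n. F s - Fn n s) \<partial>M)"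
  proof (rule nn_integral_monotone_convergence_INF_AE'[symmetric])
    show "AE s in M. F s - Fn (Suc n) s \<le> F s - Fn n s" for n
      by (intro AE_I2 ennreal_mono_minus mono)
    have "(\<integral>\<^sup>+ s. F s - Fn 0 s \<partial>M) \<le> (\<integral>\<^sup>+ s. F s \<partial>M)" by (intro nn_integral_mono) simp
    with F_fin show "(\<integral>\<^sup>+ s. F s - Fn 0 s \<partial>M) < \<infinity>" by (simp add: less_top top_unique)
  qed simp
  also have "\<dots> = 0"
  proof (subst nn_integral_0_iff_AE)
    show "AE s in M. (INF n. F s - Fn n s) = 0"
      using lim nn_integral_noteq_infinite[OF F F_fin]
      by eventually_elim (simp add: ennreal_SUP_const_minus less_top)
  qed measurable
  finally have "(INF n. \<integral>\<^sup>+ s. F s - Fn n s \<partial>M) < ennreal e" using \<open>0 < e\<close> by simp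
  then obtain n where "(\<integral>\<^sup>+ s. F s - Fn n s \<partial>M) < ennreal e" by (auto simp: INF_less_iff)
  then show "\<exists>F'. F' \<in> borel_measurable M \<and> (\<forall>s. F' s \<le> F s) \<and>
      (\<integral>\<^sup>+ s. F s - F' s \<partial>M) < ennreal e \<and> overlap_vanishes F'"
    using le van by (intro exI[of _ "Fn n"]) auto
qed simp

lemma overlap_vanishes_add:
  assumes [measurable]: "a \<in> borel_measurable M" "c \<in> borel_measurable M"
    and a_fin: "(\<integral>\<^sup>+ s. a s \<partial>M) \<noteq> \<infinity>" and c_fin: "(\<integral>\<^sup>+ s. c s \<partial>M) \<noteq> \<infinity>"
    and a_van: "overlap_vanishes a" and c_van: "overlap_vanishes c"
  shows "overlap_vanishes (\<lambda>s. a s + c s)"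
proof -
  let ?cross = "\<lambda>x u v. \<integral>\<^sup>+ s. min (flow_op_nn M \<phi> x u s) (v s) \<partial>M"
  let ?bound = "\<lambda>x. overlap_nn M \<phi> x a + ?cross x a c + ?cross x c a + overlap_nn M \<phi> x c"
  have "((\<lambda>x. ?cross x a c) \<longlongrightarrow> 0) (to_infinity G)"
    using a_van c_fin by (intro tendsto_nn_integral_min_flow_op_nn) simp_all
  moreover have "((\<lambda>x. ?cross x c a) \<longlongrightarrow> 0) (to_infinity G)"
    using c_van a_fin by (intro tendsto_nn_integral_min_flow_op_nn) simp_all
  ultimately have "(?bound \<longlongrightarrow> 0 + 0 + 0 + 0) (to_infinity G)"
    using a_van c_van by (intro tendsto_add)
  then have bound: "(?bound \<longlongrightarrow> 0) (to_infinity G)" by simp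
  have le_bound: "eventually (\<lambda>x. overlap_nn M \<phi> x (\<lambda>s. a s + c s) \<le> ?bound x) (to_infinity G)"
    using eventually_in_to_infinity
  proof eventually_elim
    case (elim x)
    then have [measurable]: "flow_op_nn M \<phi> x a \<in> borel_measurable M"
      "flow_op_nn M \<phi> x c \<in> borel_measurable M"
      by (simp_all add: flow_op_nn_measurable)
    have "overlap_nn M \<phi> x (\<lambda>s. a s + c s) \<le> (\<integral>\<^sup>+ s. min (flow_op_nn M \<phi> x a s) (a s)
        + min (flow_op_nn M \<phi> x a s) (c s) + min (flow_op_nn M \<phi> x c s) (a s)
        + min (flow_op_nn M \<phi> x c s) (c s) \<partial>M)"
      unfolding overlap_nn_def flow_op_nn_add by (intro nn_integral_mono min_add_add_le)
    also have "\<dots> = ?bound x" by (simp add: overlap_nn_def nn_integral_add)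
    finally show ?case .
  qed
  show ?thesis by (rule tendsto_sandwich[OF _ le_bound tendsto_const bound]) simp
qed

lemma overlap_vanishes_dominated:
  assumes [measurable]: "H \<in> borel_measurable M" and H_van: "overlap_vanishes H"
    and F[measurable]: "F \<in> borel_measurable M" and F_fin: "(\<integral>\<^sup>+ s. F s \<partial>M) \<noteq> \<infinity>"
    and supp: "AE s in M. H s = 0 \<longrightarrow> F s = 0"
  shows "overlap_vanishes F"
proof (rule overlap_vanishes_SUP[OF F F_fin])
  show "(\<lambda>s. min (F s) (of_nat n * H s)) \<in> borel_measurable M" for n by measurable
  show "min (F s) (of_nat n * H s) \<le> min (F s) (of_nat (Suc n) * H s)" for n s
    by (intro min.mono order_refl mult_right_mono) auto
  show "min (F s) (of_nat n * H s) \<le> F s" for n s by simp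
  show "AE s in M. (SUP n. min (F s) (of_nat n * H s)) = F s"
    using supp
  proof eventually_elim
    case (elim s)
    show ?case
    proof (cases "H s = 0")
      case False
      have "(SUP n. of_nat n * H s) = (SUP n. of_nat n :: ennreal) * H s"
        by (simp add: SUP_mult_right_ennreal)
      also have "\<dots> = \<infinity>" using False by (simp add: ennreal_SUP_of_nat_eq_top ennreal_top_mult)
      finally have SUP_top: "(SUP n. of_nat n * H s) = \<infinity>" .
      have "(SUP n. min (F s) (of_nat n * H s)) = min (F s) (SUP n. of_nat n * H s)"
        using inf_SUP[of "F s" "\<lambda>n. of_nat n * H s" UNIV] by (simp add: inf_min)
      also have "\<dots> = F s" unfolding SUP_top by simp
      finally show ?thesis .
    qed (use elim in simp)
  qed
  show "overlap_vanishes (\<lambda>s. min (F s) (of_nat n * H s))" for n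
  proof (rule tendsto_sandwich[OF _ _ tendsto_const])
    show "((\<lambda>x. of_nat n * overlap_nn M \<phi> x H) \<longlongrightarrow> 0) (to_infinity G)"
      using ennreal_tendsto_cmult[OF _ H_van, of "of_nat n"] by (simp add: of_nat_less_top)
    show "eventually (\<lambda>x. overlap_nn M \<phi> x (\<lambda>s. min (F s) (of_nat n * H s))
        \<le> of_nat n * overlap_nn M \<phi> x H) (to_infinity G)"
      using eventually_in_to_infinity
    proof eventually_elim
      case (elim x)
      then have [measurable]: "flow_op_nn M \<phi> x H \<in> borel_measurable M"
        by (simp add: flow_op_nn_measurable)
      have "overlap_nn M \<phi> x (\<lambda>s. min (F s) (of_nat n * H s))
          \<le> (\<integral>\<^sup>+ s. of_nat n * min (flow_op_nn M \<phi> x H s) (H s) \<partial>M)"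
        unfolding overlap_nn_def flow_op_nn_min flow_op_nn_cmult ennreal_mult_min
        by (intro nn_integral_mono min.mono min.cobounded2)
      also have "\<dots> = of_nat n * overlap_nn M \<phi> x H" by (simp add: overlap_nn_def nn_integral_cmult)
      finally show ?case .
    qed
  qed simp
qed

section \<open>Sets on which the overlaps vanish\<close>

definition vanishing_set :: "'a set \<Rightarrow> bool" where
  "vanishing_set A \<longleftrightarrow> A \<in> sets M \<and> (\<forall>F \<in> borel_measurable M. (\<integral>\<^sup>+ s. F s \<partial>M) \<noteq> \<infinity> \<longrightarrow>
     (AE s in M. s \<notin> A \<longrightarrow> F s = 0) \<longrightarrow> overlap_vanishes F)"

lemma vanishing_setI:
  assumes "A \<in> sets M"
    and "\<And>F. F \<in> borel_measurable M \<Longrightarrow> (\<integral>\<^sup>+ s. F s \<partial>M) \<noteq> \<infinity> \<Longrightarrow>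
      AE s in M. s \<notin> A \<longrightarrow> F s = 0 \<Longrightarrow> overlap_vanishes F"
  shows "vanishing_set A"
  using assms unfolding vanishing_set_def by blast

lemma vanishing_setD:
  "vanishing_set A \<Longrightarrow> F \<in> borel_measurable M \<Longrightarrow> (\<integral>\<^sup>+ s. F s \<partial>M) \<noteq> \<infinity> \<Longrightarrow>
    AE s in M. s \<notin> A \<longrightarrow> F s = 0 \<Longrightarrow> overlap_vanishes F"
  unfolding vanishing_set_def by blast

lemma vanishing_set_sets: "vanishing_set A \<Longrightarrow> A \<in> sets M"
  unfolding vanishing_set_def by blast

lemma vanishing_set_empty: "vanishing_set {}"
proof (rule vanishing_setI)
  fix F :: "'a \<Rightarrow> ennreal"
  assume "F \<in> borel_measurable M" "AE s in M. s \<notin> {} \<longrightarrow> F s = 0"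
  then have "(\<integral>\<^sup>+ s. F s \<partial>M) = 0" by (simp add: nn_integral_0_iff_AE)
  then have "overlap_nn M \<phi> x F = 0" for x using overlap_nn_le_nn_integral[of M \<phi> x F] by simp
  then show "overlap_vanishes F" by simp
qed simp

lemma vanishing_set_Un:
  assumes A: "vanishing_set A" and B: "vanishing_set B"
  shows "vanishing_set (A \<union> B)"
proof (rule vanishing_setI)
  have [measurable]: "A \<in> sets M" "B \<in> sets M" using A B by (simp_all add: vanishing_set_sets)
  then show "A \<union> B \<in> sets M" by simp
  fix F :: "'a \<Rightarrow> ennreal"
  assume [measurable]: "F \<in> borel_measurable M" and F_fin: "(\<integral>\<^sup>+ s. F s \<partial>M) \<noteq> \<infinity>"
    and supp: "AE s in M. s \<notin> A \<union> B \<longrightarrow> F s = 0"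
  define a where "a s = (if s \<in> A then F s else 0)" for s
  define c where "c s = (if s \<in> A then 0 else F s)" for s
  have [measurable]: "a \<in> borel_measurable M" "c \<in> borel_measurable M"
    unfolding a_def c_def by measurable
  have fin: "(\<integral>\<^sup>+ s. a s \<partial>M) \<noteq> \<infinity>" "(\<integral>\<^sup>+ s. c s \<partial>M) \<noteq> \<infinity>"
    by (rule nn_integral_noteq_top_mono[OF _ F_fin], simp add: a_def c_def)+
  have "overlap_vanishes a" using fin by (intro vanishing_setD[OF A]) (auto simp: a_def)
  moreover have "overlap_vanishes c"
    using fin supp by (intro vanishing_setD[OF B]) (auto simp: c_def elim!: eventually_mono)
  ultimately have "overlap_vanishes (\<lambda>s. a s + c s)" using fin by (intro overlap_vanishes_add) simp_all
  moreover have "(\<lambda>s. a s + c s) = F" by (auto simp: a_def c_def)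
  ultimately show "overlap_vanishes F" by simp
qed

lemma vanishing_set_finite_UN:
  fixes A :: "nat \<Rightarrow> 'a set"
  shows "(\<And>k. vanishing_set (A k)) \<Longrightarrow> vanishing_set (\<Union>k<n. A k)"
  by (induction n) (simp_all add: vanishing_set_empty vanishing_set_Un lessThan_Suc)

lemma vanishing_set_UN:
  fixes A :: "nat \<Rightarrow> 'a set"
  assumes A: "\<And>k. vanishing_set (A k)"
  shows "vanishing_set (\<Union>k. A k)"
proof (rule vanishing_setI)
  have [measurable]: "A k \<in> sets M" "(\<Union>k<n. A k) \<in> sets M" for k n
    using A by (auto simp: vanishing_set_sets)
  show "(\<Union>k. A k) \<in> sets M" by measurable
  fix F :: "'a \<Rightarrow> ennreal"
  assume F[measurable]: "F \<in> borel_measurable M" and F_fin: "(\<integral>\<^sup>+ s. F s \<partial>M) \<noteq> \<infinity>"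
    and supp: "AE s in M. s \<notin> (\<Union>k. A k) \<longrightarrow> F s = 0"
  define Fn where "Fn n s = (if s \<in> (\<Union>k<n. A k) then F s else 0)" for n s
  have Fn_fin: "(\<integral>\<^sup>+ s. Fn n s \<partial>M) \<noteq> \<infinity>" for n
    by (rule nn_integral_noteq_top_mono[OF _ F_fin]) (simp add: Fn_def)
  show "overlap_vanishes F"
  proof (rule overlap_vanishes_SUP[OF F F_fin])
    show "Fn n \<in> borel_measurable M" for n unfolding Fn_def by measurable
    show "Fn n s \<le> Fn (Suc n) s" for n s by (auto simp: Fn_def lessThan_Suc)
    show "Fn n s \<le> F s" for n s by (simp add: Fn_def)
    show "AE s in M. (SUP n. Fn n s) = F s"
      using supp
    proof eventually_elim
      case (elim s)
      show ?case
      proof (cases "s \<in> (\<Union>k. A k)")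
        case True
        then obtain k where "s \<in> A k" by blast
        then have "F s \<le> Fn (Suc k) s" by (auto simp: Fn_def)
        then show ?thesis
          by (intro antisym SUP_least SUP_upper2[of "Suc k"]) (simp_all add: Fn_def)
      qed (use elim in \<open>simp add: Fn_def\<close>)
    qed
    show "overlap_vanishes (Fn n)" for n
    proof (rule vanishing_setD[OF vanishing_set_finite_UN[OF A, where n=n]])
      show "Fn n \<in> borel_measurable M" unfolding Fn_def by measurable
      show "AE s in M. s \<notin> (\<Union>k<n. A k) \<longrightarrow> Fn n s = 0" by (simp add: Fn_def)
    qed (rule Fn_fin)
  qed
qed

lemma vanishing_set_flow_vimage:
  assumes A: "vanishing_set A" and x: "x \<in> G"
  shows "vanishing_set (\<phi> x -` A \<inter> space M)"
proof (rule vanishing_setI)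
  show "\<phi> x -` A \<inter> space M \<in> sets M"
    using flow_measurable[OF x] vanishing_set_sets[OF A] by (rule measurable_sets)
  fix F :: "'a \<Rightarrow> ennreal"
  assume [measurable]: "F \<in> borel_measurable M" and F_fin: "(\<integral>\<^sup>+ s. F s \<partial>M) \<noteq> \<infinity>"
    and supp: "AE s in M. s \<notin> \<phi> x -` A \<inter> space M \<longrightarrow> F s = 0"
  have mx: "- x \<in> G" using x by (rule uminus_in_G)
  have "overlap_vanishes (flow_op_nn M \<phi> (- x) F)"
  proof (rule vanishing_setD[OF A])
    show "flow_op_nn M \<phi> (- x) F \<in> borel_measurable M" using mx by (simp add: flow_op_nn_measurable)
    show "(\<integral>\<^sup>+ s. flow_op_nn M \<phi> (- x) F s \<partial>M) \<noteq> \<infinity>"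
      using mx F_fin by (simp add: nn_integral_flow_op_nn)
    show "AE s in M. s \<notin> A \<longrightarrow> flow_op_nn M \<phi> (- x) F s = 0"
      using AE_flow[OF mx supp] AE_space
    proof eventually_elim
      case (elim s)
      show ?case
      proof
        assume "s \<notin> A"
        then have "\<phi> (- x) s \<notin> \<phi> x -` A \<inter> space M" using flow_uminus_cancel[OF x elim(2)] by auto
        then show "flow_op_nn M \<phi> (- x) F s = 0" using elim(1) by (simp add: flow_op_nn_def)
      qed
    qed
  qed
  moreover have "eventually (\<lambda>v. overlap_nn M \<phi> v (flow_op_nn M \<phi> (- x) F) = overlap_nn M \<phi> v F)
      (to_infinity G)"
    using eventually_in_to_infinity by eventually_elim (simp add: overlap_nn_flow_op_nn mx)
  ultimately show "overlap_vanishes F" by (simp only: tendsto_cong)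
qed

lemma vanishing_set_nonzero:
  assumes H[measurable]: "H \<in> borel_measurable M" and H_van: "overlap_vanishes H"
  shows "vanishing_set {s \<in> space M. H s \<noteq> 0}"
proof (rule vanishing_setI)
  show "{s \<in> space M. H s \<noteq> 0} \<in> sets M" by measurable
  fix F :: "'a \<Rightarrow> ennreal"
  assume F: "F \<in> borel_measurable M" and F_fin: "(\<integral>\<^sup>+ s. F s \<partial>M) \<noteq> \<infinity>"
    and supp: "AE s in M. s \<notin> {s \<in> space M. H s \<noteq> 0} \<longrightarrow> F s = 0"
  have "AE s in M. H s = 0 \<longrightarrow> F s = 0" using supp AE_space by eventually_elim auto
  then show "overlap_vanishes F" by (rule overlap_vanishes_dominated[OF H H_van F F_fin])
qed

lemma obtain_maximal_vanishing_set:
  obtains N where "vanishing_set N" "\<And>B. vanishing_set B \<Longrightarrow> B - N \<in> null_sets M"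
proof (rule obtain_maximal_mod_null[of "Collect vanishing_set" "{}"])
  show "Collect vanishing_set \<subseteq> sets M" by (auto simp: vanishing_set_sets)
  show "{} \<in> Collect vanishing_set" by (simp add: vanishing_set_empty)
  show "(\<Union>i. A i) \<in> Collect vanishing_set" if "range A \<subseteq> Collect vanishing_set" for A :: "nat \<Rightarrow> 'a set"
    using that by (simp add: image_subset_iff vanishing_set_UN)
  fix N assume "N \<in> Collect vanishing_set" "\<And>B. B \<in> Collect vanishing_set \<Longrightarrow> B - N \<in> null_sets M"
  then show thesis by (intro that) simp_all
qed

lemma invariant_mod0I:
  assumes N: "N \<in> sets M" and sub: "\<And>x. x \<in> G \<Longrightarrow> (\<phi> x -` N \<inter> space M) - N \<in> null_sets M"
  shows "invariant_mod0 M G \<phi> N"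
  unfolding invariant_mod0_def
proof
  fix x assume x: "x \<in> G"
  have mx: "- x \<in> G" using x by (rule uminus_in_G)
  have "N - \<phi> x -` N \<inter> space M = \<phi> x -` ((\<phi> (- x) -` N \<inter> space M) - N) \<inter> space M"
    using sets.sets_into_space[OF N] flow_in_space[OF x] flow_uminus_cancel[OF mx] by auto
  also have "\<dots> \<in> null_sets M"
    using sub[OF mx] flow_vimage_null_iff[OF x] by blast
  finally show "emeasure M ((\<phi> x -` N \<inter> space M - N) \<union> (N - \<phi> x -` N \<inter> space M)) = 0"
    using sub[OF x] by (intro null_setsD1 null_sets.Un)
qed

lemma invariant_mod0_Diff_space:
  assumes "invariant_mod0 M G \<phi> N" "N \<subseteq> space M"
  shows "invariant_mod0 M G \<phi> (space M - N)"
  unfolding invariant_mod0_def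
proof
  fix x assume x: "x \<in> G"
  have "(\<phi> x -` (space M - N) \<inter> space M - (space M - N)) \<union> ((space M - N) - \<phi> x -` (space M - N) \<inter> space M)
      = (\<phi> x -` N \<inter> space M - N) \<union> (N - \<phi> x -` N \<inter> space M)"
    using assms(2) flow_in_space[OF x] by auto
  then show "emeasure M ((\<phi> x -` (space M - N) \<inter> space M - (space M - N))
      \<union> ((space M - N) - \<phi> x -` (space M - N) \<inter> space M)) = 0"
    using assms(1) x unfolding invariant_mod0_def by simp
qed

lemma vanishing_part_if_vanishing_set:
  assumes "vanishing_set N"
  shows "vanishing_part M G \<phi> N"
  unfolding vanishing_part_def overlap_eq_overlap_nn
proof (intro allI impI)
  fix g :: "'a \<Rightarrow> real"
  assume "integrable M g \<and> (AE s in M. 0 \<le> g s) \<and> (AE s in M. s \<notin> N \<longrightarrow> g s = 0)"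
  then show "overlap_vanishes (\<lambda>s. ennreal (g s))"
    by (intro vanishing_setD[OF assms]) auto
qed

lemma positive_part_if_maximal:
  assumes max: "\<And>B. vanishing_set B \<Longrightarrow> B - N \<in> null_sets M"
  shows "positive_part M G \<phi> (space M - N)"
  unfolding positive_part_def
proof (intro allI impI)
  fix h :: "'a \<Rightarrow> real"
  assume "integrable M h \<and> (AE s in M. 0 \<le> h s) \<and> (AE s in M. s \<notin> space M - N \<longrightarrow> h s = 0)
      \<and> \<not> (AE s in M. h s = 0)"
  then have [measurable]: "h \<in> borel_measurable M" and h_nonneg: "AE s in M. 0 \<le> h s"
    and h_supp: "AE s in M. s \<notin> space M - N \<longrightarrow> h s = 0" and h_nonzero: "\<not> (AE s in M. h s = 0)"
    by auto
  show "0 < Limsup (to_infinity G) (\<lambda>x. overlap M \<phi> x h)"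
  proof (rule ccontr)
    assume "\<not> ?thesis"
    then have "overlap_vanishes (\<lambda>s. ennreal (h s))"
      by (intro tendsto_0_if_Limsup_eq_0_ennreal) (simp add: overlap_eq_overlap_nn)
    then have "{s \<in> space M. ennreal (h s) \<noteq> 0} - N \<in> null_sets M"
      by (intro max vanishing_set_nonzero) simp_all
    then have "AE s in M. s \<notin> {s \<in> space M. ennreal (h s) \<noteq> 0} - N" by (rule AE_not_in)
    then have "AE s in M. h s = 0"
      using h_nonneg h_supp AE_space by eventually_elim (auto simp: ennreal_eq_0_iff)
    with h_nonzero show False ..
  qed
qed

end

theorem theorem5p3:
  fixes M :: "'a measure" and G :: "(real^'d) set" and \<phi> :: "real^'d \<Rightarrow> 'a \<Rightarrow> 'a"
  assumes "lattice_or_space G"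
    and "sigma_finite_measure M"
    and "nonsingular_flow M G \<phi>"
  shows "\<exists>N0 Np. N0 \<in> sets M \<and> Np \<in> sets M \<and> N0 \<inter> Np = {} \<and> N0 \<union> Np = space M
      \<and> invariant_mod0 M G \<phi> N0 \<and> invariant_mod0 M G \<phi> Np
      \<and> vanishing_part M G \<phi> N0 \<and> positive_part M G \<phi> Np
      \<and> (\<forall>N0' Np'. N0' \<in> sets M \<and> Np' \<in> sets M \<and> N0' \<inter> Np' = {} \<and> N0' \<union> Np' = space M
            \<and> vanishing_part M G \<phi> N0' \<and> positive_part M G \<phi> Np' \<longrightarrow>
            emeasure M ((N0 - N0') \<union> (N0' - N0)) = 0 \<and> emeasure M ((Np - Np') \<union> (Np' - Np)) = 0)"
proof -
  interpret nonsingular_group_flow M G \<phi>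
    using assms lattice_or_space_subgroup[OF assms(1)]
    by (intro nonsingular_group_flow.intro nonsingular_group_flow_axioms.intro) simp_all
  obtain N0 where N0: "vanishing_set N0" and max: "\<And>B. vanishing_set B \<Longrightarrow> B - N0 \<in> null_sets M"
    using obtain_maximal_vanishing_set by blast
  define Np where "Np = space M - N0"
  have N0_sets: "N0 \<in> sets M" using N0 by (rule vanishing_set_sets)
  then have partition: "Np \<in> sets M" "N0 \<inter> Np = {}" "N0 \<union> Np = space M"
    using sets.sets_into_space[OF N0_sets] by (auto simp: Np_def)
  have inv: "invariant_mod0 M G \<phi> N0"
    using N0_sets by (rule invariant_mod0I) (intro max vanishing_set_flow_vimage N0)
  have parts: "vanishing_part M G \<phi> N0" "positive_part M G \<phi> Np"
    using vanishing_part_if_vanishing_set[OF N0] positive_part_if_maximal[OF max]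
    by (simp_all add: Np_def)
  have inv_Np: "invariant_mod0 M G \<phi> Np"
    unfolding Np_def using inv sets.sets_into_space[OF N0_sets] by (rule invariant_mod0_Diff_space)
  have unique: "emeasure M ((N0 - N0') \<union> (N0' - N0)) = 0 \<and> emeasure M ((Np - Np') \<union> (Np' - Np)) = 0"
    if "N0' \<in> sets M \<and> Np' \<in> sets M \<and> N0' \<inter> Np' = {} \<and> N0' \<union> Np' = space M
      \<and> vanishing_part M G \<phi> N0' \<and> positive_part M G \<phi> Np'" for N0' Np'
    using vanishing_positive_partition_unique[of N0 Np G \<phi> N0' Np'] that N0_sets partition parts
    by (auto dest: null_setsD1)
  show ?thesis
    by (rule exI[of _ N0], rule exI[of _ Np])
      (use N0_sets partition inv inv_Np parts unique in blast)
qed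

end
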